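(* Let $r,k\geq2$ be integers with $(r,k)\neq(2,2)$. Then $\zeta<r(k-1)$, where $\zeta=r\beta/\alpha$.
   Context: $f_t(\mu)=e^{-\mu}\sum_{i\geq t}\mu^i/i!$. $\mu_{r,k}$ is the unique minimizer over $\mu>0$ of $\mu/f_{k-1}(\mu)^{r-1}$, $\alpha=f_k(\mu_{r,k})$ and $\beta=\frac1r\mu_{r,k}f_{k-1}(\mu_{r,k})$; thus $\zeta=\mu_{r,k}f_{k-1}(\mu_{r,k})/f_k(\mu_{r,k})$. *)

theory Defs
  imports "HOL-Analysis.Analysis"
begin

definition ptail :: "nat \<Rightarrow> real \<Rightarrow> real" where
  "ptail t \<mu> = exp (- \<mu>) * (\<Sum>i. if t \<le> i then \<mu> ^ i / fact i else 0)"

definition mu_rk :: "nat \<Rightarrow> nat \<Rightarrow> real" where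
  "mu_rk r k = (THE \<mu>. \<mu> > 0 \<and>
     (\<forall>\<nu>>0. \<mu> / ptail (k - 1) \<mu> ^ (r - 1) \<le> \<nu> / ptail (k - 1) \<nu> ^ (r - 1)))"

definition alpha_rk :: "nat \<Rightarrow> nat \<Rightarrow> real" where
  "alpha_rk r k = ptail k (mu_rk r k)"

definition beta_rk :: "nat \<Rightarrow> nat \<Rightarrow> real" where
  "beta_rk r k = (1 / real r) * mu_rk r k * ptail (k - 1) (mu_rk r k)"

definition zeta_rk :: "nat \<Rightarrow> nat \<Rightarrow> real" where
  "zeta_rk r k = real r * beta_rk r k / alpha_rk r k"

end

theory Submission
  imports Defs
begin

(*
  Put a = k - 1 and write f_a(x) = exp(-x) x^a / a! * H_a(x) with
  H_a(x) = sum_j a! x^j / (a + j)! (tail_ratio a below), a strictly increasing function. The derivative of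
  mu / f_a(mu)^(r-1) has the sign of H_a(mu) - c, where c = (r - 1) a, so mu_{r,k} is the
  root of H_a(mu) = c. As f_k = f_a - exp(-mu) mu^a / a!, this gives zeta = mu c / (c - 1),
  and the claim becomes mu_{r,k} < M = r a - r / (r - 1), i.e. H_a(M) > c. In the series
  for H_a(M) the terms of index at most c - 2 are at least 1, because M >= a + c - 2, and
  the next three terms add up to more than 1.
*)

lemma ptail_eq_one_minus_sum: "ptail t x = 1 - exp (-x) * (\<Sum>i<t. x^i / fact i)"
proof -
  have exp: "(\<lambda>i. x^i / fact i) sums exp x"
    using exp_converges[of x] by (simp add: divide_inverse mult.commute)
  have "(\<lambda>i. if i \<in> {..<t} then 0 else x^i / fact i) sums (exp x + (\<Sum>i<t. 0 - x^i / fact i))"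
    by (rule sums_If_finite_set'[OF exp]) auto
  moreover have "(\<lambda>i. if i \<in> {..<t} then 0 else x^i / fact i) = (\<lambda>i. if t \<le> i then x^i / fact i else 0)"
    by (auto simp: fun_eq_iff)
  ultimately have "(\<Sum>i. if t \<le> i then x^i / fact i else 0) = exp x - (\<Sum>i<t. x^i / fact i)"
    by (simp add: sum_negf sums_iff)
  then show ?thesis
    by (simp add: ptail_def right_diff_distrib exp_minus field_simps)
qed

lemma ptail_Suc: "ptail (Suc t) x = ptail t x - exp (-x) * x^t / fact t"
  by (simp add: ptail_eq_one_minus_sum algebra_simps)

lemma has_real_derivative_ptail_Suc: "(ptail (Suc t) has_real_derivative exp (-x) * x^t / fact t) (at x)"
proof (induction t)
  case 0
  have "ptail (Suc 0) = (\<lambda>x. 1 - exp (-x))"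
    by (simp add: ptail_eq_one_minus_sum fun_eq_iff)
  then show ?case
    by (auto intro!: derivative_eq_intros)
next
  case (Suc t)
  have "ptail (Suc (Suc t)) = (\<lambda>x. ptail (Suc t) x - exp (-x) * x^Suc t / fact (Suc t))"
    by (simp add: ptail_Suc[of "Suc t"] fun_eq_iff del: fact_Suc)
  moreover have "((\<lambda>x. ptail (Suc t) x - exp (-x) * x^Suc t / fact (Suc t)) has_real_derivative
      exp (-x) * x^t / fact t
        - ((- exp (-x)) * x^Suc t + exp (-x) * (real (Suc t) * x^t)) / fact (Suc t)) (at x)"
    by (auto intro!: derivative_eq_intros Suc simp del: fact_Suc power_Suc)
  moreover have "exp (-x) * x^t / fact t
      - ((- exp (-x)) * x^Suc t + exp (-x) * (real (Suc t) * x^t)) / fact (Suc t)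
    = exp (-x) * x^Suc t / fact (Suc t)"
    by (simp add: field_simps del: fact_Suc) (simp add: algebra_simps)
  ultimately show ?case
    by simp
qed

definition tail_ratio :: "nat \<Rightarrow> real \<Rightarrow> real" where
  "tail_ratio a x = (\<Sum>j. fact a / fact (a + j) * x^j)"

lemma fact_mult_fact_le_fact_add: "fact a * fact j \<le> (fact (a + j) :: real)"
proof -
  have "fact a * fact j \<le> (fact (a + j) :: nat)"
    using fact_fact_dvd_fact[of a j] by (rule dvd_imp_le) simp
  then show ?thesis
    by (metis of_nat_fact of_nat_le_iff of_nat_mult)
qed

lemma summable_tail_ratio: "summable (\<lambda>j. fact a / fact (a + j) * (x::real)^j)"
proof (rule summable_comparison_test'[where N = 0])
  show "summable (\<lambda>j. \<bar>x\<bar>^j / fact j)"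
    using summable_exp[of "\<bar>x\<bar>"] by (simp add: divide_inverse mult.commute)
  fix j
  have "fact a / fact (a + j) \<le> (1 / fact j :: real)"
    using fact_mult_fact_le_fact_add[of a j] by (simp add: field_simps)
  then have "fact a / fact (a + j) * \<bar>x\<bar>^j \<le> 1 / fact j * \<bar>x\<bar>^j"
    by (rule mult_right_mono) simp
  then show "norm (fact a / fact (a + j) * x^j) \<le> \<bar>x\<bar>^j / fact j"
    by (simp add: abs_mult power_abs)
qed

lemma tail_ratio_sums: "(\<lambda>j. fact a / fact (a + j) * x^j) sums tail_ratio a x"
  unfolding tail_ratio_def by (rule summable_sums[OF summable_tail_ratio])

lemma isCont_tail_ratio: "isCont (tail_ratio a) x"
  unfolding tail_ratio_def by (rule isCont_powser_converges_everywhere[OF summable_tail_ratio])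

lemma tail_ratio_0 [simp]: "tail_ratio a 0 = 1"
  using powser_zero[of "\<lambda>j. fact a / fact (a + j) :: real"] by (simp add: tail_ratio_def)

lemma ptail_eq_tail_ratio: "ptail a x = exp (-x) * x^a / fact a * tail_ratio a x"
proof -
  have "(\<lambda>j. x^a / fact a * (fact a / fact (a + j) * x^j)) sums (x^a / fact a * tail_ratio a x)"
    by (rule sums_mult[OF tail_ratio_sums])
  then have "(\<lambda>j. x^(j + a) / fact (j + a)) sums (x^a / fact a * tail_ratio a x)"
    by (simp add: power_add add.commute mult.commute)
  then have "(\<lambda>i. if a \<le> i then x^i / fact i else 0) sums (x^a / fact a * tail_ratio a x)"
    by (subst sums_zero_iff_shift[of a, symmetric]) (auto simp: add.commute)
  then show ?thesis
    by (simp add: ptail_def sums_iff)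
qed

lemma tail_ratio_strict_mono:
  assumes "0 \<le> x" "x < y"
  shows "tail_ratio a x < tail_ratio a y"
proof -
  let ?d = "\<lambda>j. fact a / fact (a + j) * y^j - fact a / fact (a + j) * x^j"
  have "?d sums (tail_ratio a y - tail_ratio a x)"
    by (rule sums_diff[OF tail_ratio_sums tail_ratio_sums])
  moreover have "0 \<le> ?d j" for j
  proof -
    have "x^j \<le> y^j"
      using assms by (intro power_mono) auto
    then show ?thesis
      using mult_left_mono[of "x^j" "y^j" "fact a / fact (a + j)"] by simp
  qed
  moreover have "0 < ?d 1"
    using assms by (simp add: divide_strict_right_mono)
  ultimately show ?thesis
    using suminf_pos2[of ?d 1] by (auto simp: sums_iff)
qed

lemma sum_le_tail_ratio:
  assumes "0 \<le> x"
  shows "(\<Sum>j<n. fact a / fact (a + j) * x^j) \<le> tail_ratio a x"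
  using sum_le_suminf[OF summable_tail_ratio, of "{..<n}"] assms
  by (simp add: tail_ratio_def)

lemma tail_ratio_term_Suc:
  "fact a / fact (a + Suc j) * x^Suc j = fact a / fact (a + j) * x^j * (x / real (a + Suc j))"
  by (simp add: field_simps)

lemma tail_ratio_term_ge_one:
  assumes "real (a + j) \<le> x"
  shows "1 \<le> fact a / fact (a + j) * x^j"
  using assms
proof (induction j)
  case (Suc j)
  then have le: "1 \<le> fact a / fact (a + j) * x^j" "1 \<le> x / real (a + Suc j)"
    by simp_all
  have "1 * 1 \<le> fact a / fact (a + j) * x^j * (x / real (a + Suc j))"
    by (rule mult_mono[OF le]) (use le(1) in linarith)+
  then show ?case
    by (simp only: tail_ratio_term_Suc)
qed simp

lemma one_lt_ratio_products:
  fixes n x :: real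
  assumes "3 \<le> n" and "n - 3/2 \<le> x \<or> (4 \<le> n \<and> n - 2 \<le> x)"
  shows "1 < x / (n - 1) + x / (n - 1) * (x / n) + x / (n - 1) * (x / n) * (x / (n + 1))"
proof -
  define F where "F y = y * n * (n + 1) + y^2 * (n + 1) + y^3" for y
  have F_mono: "F y \<le> F x" if "0 \<le> y" "y \<le> x" for y
    unfolding F_def using that assms(1)
    by (intro add_mono mult_right_mono power_mono) auto
  consider "n - 3/2 \<le> x" | "4 \<le> n" "n - 2 \<le> x"
    using assms(2) by blast
  then have "(n - 1) * n * (n + 1) < F x"
  proof cases
    case 1
    define t where "t = n - 3"
    have n: "n = t + 3" by (simp add: t_def)
    have "F (n - 3/2) - (n - 1) * n * (n + 1) = 51/8 + 35/2 * t + 11 * t^2 + 2 * t^3"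
      unfolding F_def n by (simp add: power2_eq_square power3_eq_cube algebra_simps) (simp add: field_simps)
    moreover have "0 \<le> 35/2 * t + 11 * t^2 + 2 * t^3"
      using assms(1) by (simp add: t_def)
    ultimately have "(n - 1) * n * (n + 1) < F (n - 3/2)"
      by simp
    with F_mono[of "n - 3/2"] 1 assms(1) show ?thesis
      by simp
  next
    case 2
    define t where "t = n - 4"
    have n: "n = t + 4" by (simp add: t_def)
    have "F (n - 2) - (n - 1) * n * (n + 1) = 8 + 27 * t + 14 * t^2 + 2 * t^3"
      unfolding F_def n by (simp add: power2_eq_square power3_eq_cube algebra_simps)
    moreover have "0 \<le> 27 * t + 14 * t^2 + 2 * t^3"
      using 2 by (simp add: t_def)
    ultimately have "(n - 1) * n * (n + 1) < F (n - 2)"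
      by simp
    with F_mono[of "n - 2"] 2 show ?thesis
      by simp
  qed
  moreover have "0 < n - 1" "0 < n" "0 < n + 1"
    using assms(1) by auto
  ultimately show ?thesis
    by (simp add: F_def divide_simps power2_eq_square power3_eq_cube) (simp add: algebra_simps)
qed

lemma tail_ratio_gt:
  assumes "1 \<le> a" and n: "n = real (a + m) + 2"
    and x: "n - 3/2 \<le> x \<or> (4 \<le> n \<and> n - 2 \<le> x)"
  shows "real m + 2 < tail_ratio a x"
proof -
  define T where "T j = fact a / fact (a + j) * x^j" for j
  have "3 \<le> n" "real (a + m) \<le> x"
    using assms by auto
  have T_ge_one: "1 \<le> T j" if "j \<le> m" for j
    unfolding T_def using that \<open>real (a + m) \<le> x\<close> by (intro tail_ratio_term_ge_one) simp
  have "real (Suc m) \<le> (\<Sum>j<Suc m. T j)"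
    using sum_mono[of "{..<Suc m}" "\<lambda>_. 1" T] T_ge_one by simp
  moreover have "1 < T (Suc m) + T (Suc (Suc m)) + T (Suc (Suc (Suc m)))"
  proof -
    have T_Suc: "T (Suc j) = T j * (x / real (a + Suc j))" for j
      unfolding T_def by (rule tail_ratio_term_Suc)
    have "real (a + Suc m) = n - 1" "real (a + Suc (Suc m)) = n"
      "real (a + Suc (Suc (Suc m))) = n + 1"
      using n by simp_all
    note T_next = T_Suc[of m, unfolded this(1)] T_Suc[of "Suc m", unfolded this(2)]
      T_Suc[of "Suc (Suc m)", unfolded this(3)]
    define q where "q = x / (n - 1) + x / (n - 1) * (x / n) + x / (n - 1) * (x / n) * (x / (n + 1))"
    have "T (Suc m) + T (Suc (Suc m)) + T (Suc (Suc (Suc m))) = T m * q"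
      using T_next by (simp add: q_def algebra_simps)
    moreover have "1 < q"
      unfolding q_def by (rule one_lt_ratio_products[OF \<open>3 \<le> n\<close> x])
    moreover have "1 * q \<le> T m * q"
      using calculation(2) T_ge_one[of m] by (intro mult_right_mono) simp_all
    ultimately show ?thesis
      by linarith
  qed
  ultimately have "real m + 2 < (\<Sum>j<Suc m + 3. T j)"
    by (simp add: numeral_3_eq_3)
  also have "\<dots> \<le> tail_ratio a x"
    unfolding T_def using \<open>real (a + m) \<le> x\<close> by (intro sum_le_tail_ratio) simp
  finally show ?thesis .
qed

lemma two_le_pred_mult:
  fixes r a :: nat
  assumes "2 \<le> r" "1 \<le> a" "(r, a) \<noteq> (2, 1)"
  shows "2 \<le> (r - 1) * a"
proof (cases "r = 2")
  case True
  then show ?thesis using assms by auto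
next
  case False
  then have "2 * 1 \<le> (r - 1) * a"
    using assms by (intro mult_mono) auto
  then show ?thesis by simp
qed

lemma tail_ratio_threshold:
  fixes r a :: nat
  assumes "2 \<le> r" "1 \<le> a" "(r, a) \<noteq> (2, 1)"
  shows "(real r - 1) * real a < tail_ratio a (real r * real a - real r / (real r - 1))"
proof -
  define m where "m = (r - 1) * a - 2"
  have m: "real m + 2 = (real r - 1) * real a"
    using two_le_pred_mult[OF assms] assms(1) by (simp add: m_def of_nat_diff)
  have n: "real r * real a = real (a + m) + 2"
    using m by (simp add: algebra_simps)
  have "real r * real a - 3/2 \<le> real r * real a - real r / (real r - 1)
    \<or> (4 \<le> real r * real a \<and> real r * real a - 2 \<le> real r * real a - real r / (real r - 1))"
  proof (cases "r = 2")
    case True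
    then have "2 \<le> a" using assms by auto
    then show ?thesis using True by simp
  next
    case False
    then have "real r / (real r - 1) \<le> 3/2"
      using assms(1) by (simp add: divide_le_eq)
    then show ?thesis by simp
  qed
  then show ?thesis
    using tail_ratio_gt[OF assms(2) n] m by simp
qed

lemma has_real_derivative_div_ptail_power:
  assumes "1 \<le> a" and "0 < x"
  shows "\<exists>P>0. ((\<lambda>y. y / ptail a y ^ p) has_real_derivative P * (tail_ratio a x - real p * real a)) (at x)"
proof -
  obtain b where a: "a = Suc b"
    using assms(1) by (cases a) auto
  define F where "F = ptail a x"
  define F' where "F' = exp (-x) * x^b / fact b"
  define K where "K = exp (-x) * x^a / fact a"
  have "0 < K"
    using assms(2) by (simp add: K_def)
  have F: "F = K * tail_ratio a x"
    unfolding F_def K_def by (rule ptail_eq_tail_ratio)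
  with \<open>0 < K\<close> tail_ratio_strict_mono[of 0 x a] have "0 < F"
    using assms(2) by simp
  have xF': "x * F' = real a * K"
    unfolding F'_def K_def a by (simp add: field_simps del: fact_Suc) (simp add: algebra_simps)
  have "((\<lambda>y. y / ptail a y ^ p) has_real_derivative
      (1 * F^p - real p * F' * F^(p - 1) * x) / (F^p)^2) (at x)"
    using DERIV_quotient[OF DERIV_ident DERIV_power[OF has_real_derivative_ptail_Suc[of b x], of p]]
      \<open>0 < F\<close> by (simp add: F_def F'_def a power2_eq_square mult.assoc)
  moreover have "(1 * F^p - real p * F' * F^(p - 1) * x) / (F^p)^2
      = K / F^Suc p * (tail_ratio a x - real p * real a)"
  proof -
    have "real p * F^(p - 1) * F = real p * F^p"
      by (cases p) simp_all
    then have "(1 * F^p - real p * F' * F^(p - 1) * x) * F = F^p * (F - real p * (x * F'))"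
      by (simp add: algebra_simps) auto
    also have "F - real p * (x * F') = K * (tail_ratio a x - real p * real a)"
      unfolding xF' F by (simp add: algebra_simps)
    finally have "(1 * F^p - real p * F' * F^(p - 1) * x) * F
        = F^p * (K * (tail_ratio a x - real p * real a))" .
    moreover have "N / G^2 = D / (F * G)" if "N * F = G * D" "0 < G" "0 < F" for N G D F :: real
      using that by (simp add: field_simps power2_eq_square)
    ultimately show ?thesis
      using \<open>0 < F\<close> by (simp add: mult.assoc)
  qed
  moreover have "0 < K / F^Suc p"
    using \<open>0 < K\<close> \<open>0 < F\<close> by simp
  ultimately show ?thesis
    by metis
qed

lemma div_ptail_power_strict_min:
  assumes "1 \<le> a" "0 < \<mu>" "tail_ratio a \<mu> = real p * real a" "0 < \<nu>" "\<nu> \<noteq> \<mu>"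
  shows "\<mu> / ptail a \<mu> ^ p < \<nu> / ptail a \<nu> ^ p"
proof -
  define g where "g y = y / ptail a y ^ p" for y
  have deriv: "\<exists>D. (g has_real_derivative D) (at x) \<and> sgn D = sgn (tail_ratio a x - real p * real a)"
    if "0 < x" for x
    using has_real_derivative_div_ptail_power[OF assms(1) that, of p]
    by (auto simp: g_def[abs_def] sgn_mult)
  have cont: "continuous_on {u..v} g" if "0 < u" for u v
  proof (intro continuous_at_imp_continuous_on ballI)
    fix x assume "x \<in> {u..v}"
    with that have "0 < x" by simp
    then show "isCont g x"
      using deriv DERIV_isCont by blast
  qed
  show ?thesis
  proof (cases "\<mu> < \<nu>")
    case True
    have "g \<mu> < g \<nu>"
    proof (rule DERIV_pos_imp_increasing_open[OF True _ cont[OF assms(2)]])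
      fix x assume "\<mu> < x" "x < \<nu>"
      then have "tail_ratio a \<mu> < tail_ratio a x"
        using assms(2) by (intro tail_ratio_strict_mono) simp_all
      with deriv[of x] \<open>\<mu> < x\<close> assms(2,3) show "\<exists>D. (g has_real_derivative D) (at x) \<and> 0 < D"
        by (force simp: sgn_if split: if_splits)
    qed
    then show ?thesis by (simp add: g_def)
  next
    case False
    with assms(5) have "\<nu> < \<mu>" by simp
    have "g \<mu> < g \<nu>"
    proof (rule DERIV_neg_imp_decreasing_open[OF \<open>\<nu> < \<mu>\<close> _ cont[OF assms(4)]])
      fix x assume "\<nu> < x" "x < \<mu>"
      then have "tail_ratio a x < tail_ratio a \<mu>"
        using assms(4) by (intro tail_ratio_strict_mono) simp_all
      with deriv[of x] \<open>\<nu> < x\<close> assms(3,4) show "\<exists>D. (g has_real_derivative D) (at x) \<and> D < 0"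
        by (force simp: sgn_if split: if_splits)
    qed
    then show ?thesis by (simp add: g_def)
  qed
qed

lemma mu_rk_eqI:
  assumes "2 \<le> k" "0 < \<mu>" "tail_ratio (k - 1) \<mu> = real (r - 1) * real (k - 1)"
  shows "mu_rk r k = \<mu>"
  unfolding mu_rk_def
proof (rule the_equality)
  have "1 \<le> k - 1" using assms(1) by simp
  note strict_min = div_ptail_power_strict_min[OF this assms(2,3)]
  show "0 < \<mu> \<and> (\<forall>\<nu>>0. \<mu> / ptail (k - 1) \<mu> ^ (r - 1) \<le> \<nu> / ptail (k - 1) \<nu> ^ (r - 1))"
    using assms(2) strict_min by (metis less_eq_real_def)
  show "\<mu>' = \<mu>" if "0 < \<mu>' \<and> (\<forall>\<nu>>0. \<mu>' / ptail (k - 1) \<mu>' ^ (r - 1) \<le> \<nu> / ptail (k - 1) \<nu> ^ (r - 1))"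
    for \<mu>'
    using that assms(2) strict_min[of \<mu>'] by force
qed

lemma zeta_rk_eq:
  assumes "0 < r" "1 \<le> k" "mu_rk r k = \<mu>" "0 < \<mu>" "tail_ratio (k - 1) \<mu> = c"
  shows "zeta_rk r k = \<mu> * c / (c - 1)"
proof -
  define K where "K = exp (-\<mu>) * \<mu>^(k - 1) / fact (k - 1)"
  have "0 < K"
    using assms(4) by (simp add: K_def)
  have tail: "ptail (k - 1) \<mu> = K * c"
    using ptail_eq_tail_ratio[of "k - 1" \<mu>] assms(5) by (simp add: K_def)
  moreover have "ptail k \<mu> = K * (c - 1)"
  proof -
    have "ptail k \<mu> = ptail (k - 1) \<mu> - K"
      using ptail_Suc[of "k - 1" \<mu>] assms(2) by (simp add: K_def)
    with tail show ?thesis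
      by (simp add: algebra_simps)
  qed
  ultimately show ?thesis
    using assms(1,3) \<open>0 < K\<close>
    by (simp add: zeta_rk_def beta_rk_def alpha_rk_def)
qed

lemma tail_ratio_eq_between:
  assumes "1 < c" "c < tail_ratio a M" "0 \<le> M"
  obtains \<mu> where "0 < \<mu>" "\<mu> < M" "tail_ratio a \<mu> = c"
proof -
  have "continuous_on {0..M} (tail_ratio a)"
    by (intro continuous_at_imp_continuous_on ballI isCont_tail_ratio)
  then obtain \<mu> where "0 \<le> \<mu>" "\<mu> \<le> M" "tail_ratio a \<mu> = c"
    using IVT'[of "tail_ratio a" 0 c M] assms by auto
  moreover have "\<mu> \<noteq> 0" "\<mu> \<noteq> M"
    using assms calculation(3) by auto
  ultimately show ?thesis
    by (force intro: that simp: less_le)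
qed

theorem lemma50:
  fixes r k :: nat
  assumes "r \<ge> 2" and "k \<ge> 2" and "(r, k) \<noteq> (2, 2)"
  shows "zeta_rk r k < real r * (real k - 1)"
proof -
  define a where "a = k - 1"
  have k: "k = Suc a" "1 \<le> a"
    using assms(2) by (simp_all add: a_def)
  with assms(3) have ra: "(r, a) \<noteq> (2, 1)"
    by auto
  define c where "c = (real r - 1) * real a"
  define M where "M = real r * real a - real r / (real r - 1)"
  have "2 \<le> real ((r - 1) * a)"
    using two_le_pred_mult[OF assms(1) k(2) ra] by (metis of_nat_numeral of_nat_le_iff)
  with assms(1) have "2 \<le> c"
    by (simp add: c_def of_nat_diff)
  have M_c: "M * c = real r * real a * (c - 1)"
    using assms(1) unfolding M_def c_def by (simp add: field_simps)
  then have "0 \<le> M * c"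
    using \<open>2 \<le> c\<close> by simp
  with \<open>2 \<le> c\<close> have "0 \<le> M"
    by (simp add: zero_le_mult_iff)
  then obtain \<mu> where \<mu>: "0 < \<mu>" "\<mu> < M" "tail_ratio a \<mu> = c"
    using tail_ratio_eq_between[of c a M] tail_ratio_threshold[OF assms(1) k(2) ra] \<open>2 \<le> c\<close>
    by (auto simp: c_def M_def)
  then have "mu_rk r k = \<mu>"
    using assms(1,2) by (intro mu_rk_eqI) (simp_all add: a_def c_def of_nat_diff)
  then have "zeta_rk r k = \<mu> * c / (c - 1)"
    using \<mu> assms(1,2) by (intro zeta_rk_eq) (simp_all add: a_def)
  also have "\<dots> < M * c / (c - 1)"
    using \<mu>(2) \<open>2 \<le> c\<close> by (simp add: divide_strict_right_mono)
  also have "\<dots> = real r * (real k - 1)"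
    using M_c \<open>2 \<le> c\<close> k(1) by simp
  finally show ?thesis .
qed

end
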